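(* Suppose $J^d_\mu$ takes the same value for all $d\in\mathcal D$. Then the policy $d$ returned by Algorithm 1 (from any initial policy) is globally optimal: $J^d_{\mu,\sigma}=\max_{d'\in\mathcal D}J^{d'}_{\mu,\sigma}$.
   Context: Let $\mathcal S=\{1,\dots,S\}$ be a finite state space and $\mathcal A$ a finite action set, with transition probabilities $p^a(i,j)\ge0$ ($\sum_j p^a(i,j)=1$) and rewards $r(i,a)\in\mathbb R$. A deterministic stationary policy is a map $d:\mathcal S\to\mathcal A$; $\mathcal D$ is the set of these; $\mathbf P^d$ has entries $p^{d(i)}(i,j)$, $\mathbf r^d$ has entries $r(i,d(i))$. Standing assumption: every $\mathbf P^d$ is irreducible, with unique stationary distribution $\boldsymbol\pi^d$ (positive entries). Define $J^d_\mu=\boldsymbol\pi^d\mathbf r^d$, and for fixed $\beta>0$, $J^d_{\mu,\sigma}=\boldsymbol\pi^d\mathbf f^d$ with $f^d(i)=r(i,d(i))-\beta(r(i,d(i))-J^d_\mu)^2$; $\mathbf g^d$ is any solution of $\mathbf g^d=\mathbf f^d-J^d_{\mu,\sigma}\mathbf 1+\mathbf P^d\mathbf g^d$. Algorithm 1: choose any $d^{(0)}\in\mathcal D$, $l=0$; repeat: compute $J_\mu=J^{d^{(l)}}_\mu$ and $\mathbf g=\mathbf g^{d^{(l)}}$; define $d^{(l+1)}(i)\in\arg\max_{a\in\mathcal A}\{r(i,a)-\beta[r(i,a)-J_\mu]^2+\sum_j p^a(i,j)g(j)\}$ for all $i$, choosing $d^{(l+1)}(i)=d^{(l)}(i)$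 whenever $d^{(l)}(i)$ attains the maximum; set $l:=l+1$; until $d^{(l)}=d^{(l-1)}$; return $d^{(l)}$ (this terminates after finitely many iterations). *)

theory Defs
  imports Complex_Main
begin

text \<open>States: a finite type 's; actions: a finite type 'a.
  p a i j = transition probability from i to j under action a; r i a = reward.\<close>

definition Pmat :: "('a \<Rightarrow> 's \<Rightarrow> 's \<Rightarrow> real) \<Rightarrow> ('s \<Rightarrow> 'a) \<Rightarrow> 's \<Rightarrow> 's \<Rightarrow> real" where
  "Pmat p d i j = p (d i) i j"

fun mpow :: "('s::finite \<Rightarrow> 's \<Rightarrow> real) \<Rightarrow> nat \<Rightarrow> 's \<Rightarrow> 's \<Rightarrow> real" where
  "mpow P 0 i j = (if i = j then 1 else 0)"
| "mpow P (Suc n) i j = (\<Sum>k\<in>UNIV. mpow P n i k * P k j)"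

definition irreducible_mat :: "('s::finite \<Rightarrow> 's \<Rightarrow> real) \<Rightarrow> bool" where
  "irreducible_mat P \<longleftrightarrow> (\<forall>i j. \<exists>n. mpow P n i j > 0)"

definition is_stationary :: "('s::finite \<Rightarrow> 's \<Rightarrow> real) \<Rightarrow> ('s \<Rightarrow> real) \<Rightarrow> bool" where
  "is_stationary P \<pi> \<longleftrightarrow> (\<forall>i. \<pi> i \<ge> 0) \<and> (\<Sum>i\<in>UNIV. \<pi> i) = 1 \<and>
     (\<forall>j. (\<Sum>i\<in>UNIV. \<pi> i * P i j) = \<pi> j)"

definition stat_dist :: "('a \<Rightarrow> 's::finite \<Rightarrow> 's \<Rightarrow> real) \<Rightarrow> ('s \<Rightarrow> 'a) \<Rightarrow> 's \<Rightarrow> real" where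
  "stat_dist p d = (THE \<pi>. is_stationary (Pmat p d) \<pi>)"

definition J_mu :: "('a \<Rightarrow> 's::finite \<Rightarrow> 's \<Rightarrow> real) \<Rightarrow> ('s \<Rightarrow> 'a \<Rightarrow> real) \<Rightarrow> ('s \<Rightarrow> 'a) \<Rightarrow> real" where
  "J_mu p r d = (\<Sum>i\<in>UNIV. stat_dist p d i * r i (d i))"

definition f_ms :: "('a \<Rightarrow> 's::finite \<Rightarrow> 's \<Rightarrow> real) \<Rightarrow> ('s \<Rightarrow> 'a \<Rightarrow> real) \<Rightarrow> real \<Rightarrow> ('s \<Rightarrow> 'a) \<Rightarrow> 's \<Rightarrow> real" where
  "f_ms p r \<beta> d i = r i (d i) - \<beta> * (r i (d i) - J_mu p r d)\<^sup>2"

definition J_ms :: "('a \<Rightarrow> 's::finite \<Rightarrow> 's \<Rightarrow> real) \<Rightarrow> ('s \<Rightarrow> 'a \<Rightarrow> real) \<Rightarrow> real \<Rightarrow> ('s \<Rightarrow> 'a) \<Rightarrow> real" where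
  "J_ms p r \<beta> d = (\<Sum>i\<in>UNIV. stat_dist p d i * f_ms p r \<beta> d i)"

definition poisson_sol :: "('a \<Rightarrow> 's::finite \<Rightarrow> 's \<Rightarrow> real) \<Rightarrow> ('s \<Rightarrow> 'a \<Rightarrow> real) \<Rightarrow> real \<Rightarrow> ('s \<Rightarrow> 'a) \<Rightarrow> ('s \<Rightarrow> real) \<Rightarrow> bool" where
  "poisson_sol p r \<beta> d g \<longleftrightarrow>
     (\<forall>i. g i = f_ms p r \<beta> d i - J_ms p r \<beta> d + (\<Sum>j\<in>UNIV. Pmat p d i j * g j))"

definition Qval :: "('a \<Rightarrow> 's::finite \<Rightarrow> 's \<Rightarrow> real) \<Rightarrow> ('s \<Rightarrow> 'a \<Rightarrow> real) \<Rightarrow> real \<Rightarrow> real \<Rightarrow> ('s \<Rightarrow> real) \<Rightarrow> 's \<Rightarrow> 'a \<Rightarrow> real" where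
  "Qval p r \<beta> J g i a = r i a - \<beta> * (r i a - J)\<^sup>2 + (\<Sum>j\<in>UNIV. p a i j * g j)"

text \<open>A terminated run of Algorithm 1: policies ds 0, ..., ds L (L \<ge> 1), bias vectors gs l
  (any Poisson solutions), improvement steps with the tie-breaking rule, stopping at the
  first L with ds L = ds (L-1). The returned policy is ds L.\<close>
definition alg1_run :: "('a \<Rightarrow> 's::finite \<Rightarrow> 's \<Rightarrow> real) \<Rightarrow> ('s \<Rightarrow> 'a \<Rightarrow> real) \<Rightarrow> real \<Rightarrow>
    (nat \<Rightarrow> 's \<Rightarrow> 'a) \<Rightarrow> (nat \<Rightarrow> 's \<Rightarrow> real) \<Rightarrow> nat \<Rightarrow> bool" where
  "alg1_run p r \<beta> ds gs L \<longleftrightarrow>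
     L \<ge> 1 \<and>
     (\<forall>l<L. poisson_sol p r \<beta> (ds l) (gs l)) \<and>
     (\<forall>l<L. \<forall>i.
        (\<forall>a. Qval p r \<beta> (J_mu p r (ds l)) (gs l) i a
              \<le> Qval p r \<beta> (J_mu p r (ds l)) (gs l) i (ds (Suc l) i)) \<and>
        ((\<forall>a. Qval p r \<beta> (J_mu p r (ds l)) (gs l) i a
              \<le> Qval p r \<beta> (J_mu p r (ds l)) (gs l) i (ds l i)) \<longrightarrow> ds (Suc l) i = ds l i)) \<and>
     (\<forall>l. l + 1 < L \<longrightarrow> ds (Suc l) \<noteq> ds l) \<and>
     ds L = ds (L - 1)"

end

theory Submission
  imports Defs
begin

text \<open>When all policies have the same mean reward, the improvement objective of Algorithm 1 at
  the returned policy d (with bias g) evaluates any policy d' to exactly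
  f^{d'}(i) + (P^{d'} g)(i). Termination says d is greedy, so by the Poisson equation of d this is
  at most g(i) + J^d_{\<mu>,\<sigma>} at every state. Averaging this inequality against the
  stationary distribution of d', which is invariant under P^{d'}, cancels the bias terms and
  leaves J^{d'}_{\<mu>,\<sigma>} \<le> J^d_{\<mu>,\<sigma>}.\<close>

lemma stationary_sum_transition:
  fixes P :: "'s::finite \<Rightarrow> 's \<Rightarrow> real"
  assumes "is_stationary P \<pi>"
  shows "(\<Sum>i\<in>UNIV. \<pi> i * (\<Sum>j\<in>UNIV. P i j * g j)) = (\<Sum>j\<in>UNIV. \<pi> j * g j)"
proof -
  have "(\<Sum>i\<in>UNIV. \<pi> i * (\<Sum>j\<in>UNIV. P i j * g j))
      = (\<Sum>i\<in>UNIV. \<Sum>j\<in>UNIV. \<pi> i * P i j * g j)"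
    by (simp add: sum_distrib_left mult.assoc)
  also have "\<dots> = (\<Sum>j\<in>UNIV. (\<Sum>i\<in>UNIV. \<pi> i * P i j) * g j)"
    by (subst sum.swap) (simp add: sum_distrib_right)
  also have "\<dots> = (\<Sum>j\<in>UNIV. \<pi> j * g j)"
    using assms by (simp add: is_stationary_def)
  finally show ?thesis .
qed

lemma stationary_average_le_of_poisson_le:
  fixes P :: "'s::finite \<Rightarrow> 's \<Rightarrow> real"
  assumes stat: "is_stationary P \<pi>"
    and le: "\<And>i. f i + (\<Sum>j\<in>UNIV. P i j * g j) \<le> g i + c"
  shows "(\<Sum>i\<in>UNIV. \<pi> i * f i) \<le> c"
proof -
  have "(\<Sum>i\<in>UNIV. \<pi> i * f i) + (\<Sum>j\<in>UNIV. \<pi> j * g j)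
      = (\<Sum>i\<in>UNIV. \<pi> i * (f i + (\<Sum>j\<in>UNIV. P i j * g j)))"
    using stationary_sum_transition[OF stat] by (simp add: distrib_left sum.distrib)
  also have "\<dots> \<le> (\<Sum>i\<in>UNIV. \<pi> i * (g i + c))"
    using stat le by (intro sum_mono mult_left_mono) (auto simp: is_stationary_def)
  also have "\<dots> = (\<Sum>j\<in>UNIV. \<pi> j * g j) + c"
    using stat by (simp add: distrib_left sum.distrib sum_distrib_right[symmetric] is_stationary_def)
  finally show ?thesis by simp
qed

lemma is_stationary_stat_dist:
  assumes "\<exists>!\<pi>. is_stationary (Pmat p d) \<pi>"
  shows "is_stationary (Pmat p d) (stat_dist p d)"
  unfolding stat_dist_def using theI'[OF assms] .

lemma Qval_policy_action:
  assumes "J_mu p r d = J"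
  shows "Qval p r \<beta> J g i (d i) = f_ms p r \<beta> d i + (\<Sum>j\<in>UNIV. Pmat p d i j * g j)"
  using assms by (simp add: Qval_def f_ms_def Pmat_def)

lemma Qval_poisson_sol:
  assumes "poisson_sol p r \<beta> d g"
  shows "Qval p r \<beta> (J_mu p r d) g i (d i) = g i + J_ms p r \<beta> d"
proof -
  have "g i = f_ms p r \<beta> d i - J_ms p r \<beta> d + (\<Sum>j\<in>UNIV. Pmat p d i j * g j)"
    using assms unfolding poisson_sol_def by blast
  then show ?thesis
    using Qval_policy_action[of p r d "J_mu p r d" \<beta> g i] by linarith
qed

lemma alg1_run_returns_greedy:
  assumes "alg1_run p r \<beta> ds gs L"
  shows "poisson_sol p r \<beta> (ds L) (gs (L - 1))"
    and "Qval p r \<beta> (J_mu p r (ds L)) (gs (L - 1)) i a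
           \<le> Qval p r \<beta> (J_mu p r (ds L)) (gs (L - 1)) i (ds L i)"
proof -
  have L: "L - 1 < L" "Suc (L - 1) = L" "ds (L - 1) = ds L"
    using assms by (auto simp: alg1_run_def)
  have pois: "\<forall>l<L. poisson_sol p r \<beta> (ds l) (gs l)"
    and step: "\<forall>l<L. \<forall>i a. Qval p r \<beta> (J_mu p r (ds l)) (gs l) i a
                 \<le> Qval p r \<beta> (J_mu p r (ds l)) (gs l) i (ds (Suc l) i)"
    using assms unfolding alg1_run_def by blast+
  show "poisson_sol p r \<beta> (ds L) (gs (L - 1))"
    using pois[rule_format, OF L(1)] unfolding L(3) .
  show "Qval p r \<beta> (J_mu p r (ds L)) (gs (L - 1)) i a
           \<le> Qval p r \<beta> (J_mu p r (ds L)) (gs (L - 1)) i (ds L i)"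
    using step[rule_format, OF L(1)] unfolding L(2,3) .
qed

lemma greedy_poisson_sol_J_ms_optimal:
  assumes uniq_stat: "\<And>d. \<exists>!\<pi>. is_stationary (Pmat p d) \<pi>"
    and Jmu_const: "\<And>d d'. J_mu p r d = J_mu p r d'"
    and pois: "poisson_sol p r \<beta> d g"
    and greedy: "\<And>i a. Qval p r \<beta> (J_mu p r d) g i a \<le> Qval p r \<beta> (J_mu p r d) g i (d i)"
  shows "J_ms p r \<beta> d' \<le> J_ms p r \<beta> d"
  unfolding J_ms_def [of p r \<beta> d']
proof (rule stationary_average_le_of_poisson_le[OF is_stationary_stat_dist[OF uniq_stat]])
  fix i
  have "f_ms p r \<beta> d' i + (\<Sum>j\<in>UNIV. Pmat p d' i j * g j) = Qval p r \<beta> (J_mu p r d) g i (d' i)"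
    using Qval_policy_action[OF Jmu_const] by simp
  also have "\<dots> \<le> g i + J_ms p r \<beta> d"
    using greedy[of i "d' i"] Qval_poisson_sol[OF pois, of i] by simp
  finally show "f_ms p r \<beta> d' i + (\<Sum>j\<in>UNIV. Pmat p d' i j * g j) \<le> g i + J_ms p r \<beta> d" .
qed

theorem mainTheorem10:
  fixes p :: "'a::finite \<Rightarrow> 's::finite \<Rightarrow> 's \<Rightarrow> real"
    and r :: "'s \<Rightarrow> 'a \<Rightarrow> real"
    and \<beta> :: real
    and ds :: "nat \<Rightarrow> 's \<Rightarrow> 'a" and gs :: "nat \<Rightarrow> 's \<Rightarrow> real" and L :: nat
  assumes p_nonneg: "\<And>a i j. p a i j \<ge> 0"
    and p_row: "\<And>a i. (\<Sum>j\<in>UNIV. p a i j) = 1"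
    and irred: "\<And>d. irreducible_mat (Pmat p d)"
    and uniq_stat: "\<And>d. \<exists>!\<pi>. is_stationary (Pmat p d) \<pi>"
    and beta_pos: "\<beta> > 0"
    and Jmu_const: "\<And>d d'. J_mu p r d = J_mu p r d'"
    and run: "alg1_run p r \<beta> ds gs L"
  shows "J_ms p r \<beta> (ds L) = Max (range (J_ms p r \<beta>))"
proof -
  have "J_ms p r \<beta> d' \<le> J_ms p r \<beta> (ds L)" for d'
    using greedy_poisson_sol_J_ms_optimal[OF uniq_stat Jmu_const
        alg1_run_returns_greedy(1)[OF run] alg1_run_returns_greedy(2)[OF run]] .
  then show ?thesis
    by (intro Max_eqI[symmetric]) auto
qed

end
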